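(* Let $x_0\in\mathbb{R}$, $T>0$, $M\ge2$, and let $f_1:(0,i]\to\mathbb{C}$ satisfy $f_1(k)=0$ for $k\in[\tfrac i2,i]$, $f_1\in C^\infty((0,i))$, and $\int_1^\infty\frac{|f_1(i/y)|}{y}dy\le\frac1M$ (these are exactly the conditions imposed on $f_1$ by the standing hypotheses below). Then for all $j\in\mathbb{N}_{>0}$, $x\in\mathbb{R}$ and $t\in[0,T)$, $$\Big|\partial_x m_j^{(1)}(x,t)\Big|\le\frac{1}{M^{j-1}}\int_1^\infty e^{-\frac{T-t}{4}y^2}|y f_1(\tfrac iy)|\,dy+\frac{j-1}{M^{j-2}}\Big(\int_1^\infty e^{-\frac{T-t}{4}y^2}|f_1(\tfrac iy)|\,dy\Big)^2.$$
   Context: Standing hypotheses: $r_1:\hat\Gamma_1\to\mathbb{C}$, $r_2:\hat\Gamma_4\setminus\{\omega^2,-\omega^2\}\to\mathbb{C}$ with $r_1\in C^\infty(\hat\Gamma_1)$, $r_2\in C^\infty(\hat\Gamma_4\setminus\{\omega^2,-\omega^2\})$, rapid decay of $r_1$ on $\Gamma_1$ and $r_2$ on $\Gamma_4$ together with all derivatives, $r_2(k)=\tilde r(k)\overline{r_1(\bar k^{-1})}$, $r_1=r_2=0$ on $\partial\mathbb{D}$, $r_1=0$ on $[-i,-i\infty)$, and $r_1(k)=f_1(k)e^{-\frac{x_0}{2k}}e^{\frac{T}{4k^2}}$ on $(0,i]$. Notation: $\omega=e^{2\pi i/3}$, $\mathbb{D}$ the open unit disk, $(a,b)$ the open segment/ray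 oriented from $a$ to $b$; $\Gamma_1=(0,i)\cup(-i,-i\infty)$, $\Gamma_4=(0,-i)\cup(i,i\infty)$, $\hat\Gamma_j=\Gamma_j\cup\partial\mathbb{D}$; $\Gamma_{1'}=(-i,-i\infty)$, $\Gamma_{4'}=(i,i\infty)$, $\tilde\Gamma=(e^{-\pi i/6},e^{-\pi i/6}\infty)\cup(e^{5\pi i/6},e^{5\pi i/6}\infty)$; $\tilde r(k)=\frac{\omega^2-k^2}{1-\omega^2k^2}$; $f_2(k)=\tilde r(k)\overline{f_1(\bar k^{-1})}$ on $(i,i\infty)$; $\tilde f_0=f_1(1/\cdot)$ on $\Gamma_{1'}$, $\tilde f_0=f_2$ on $\Gamma_{4'}$; $\tilde h_0(x,t,k)=\tilde f_0(k)e^{-\frac{x}{2k}+\frac{t}{4k^2}}$. For $k_1\in\tilde\Gamma$: $F(x,t,k,k_1)=e^{\frac{x-x_0}{2}\omega k_1}e^{\frac{T-t}{4}(\omega k_1)^2}\big(\frac{\omega^2}{\omega^2k_1-k}-\frac{\omega/k_1^2}{\frac{1}{\omega^2k_1}-k}\big)\frac{\tilde h_0(x,t,\omega k_1)}{2\pi i}$ and $F^{(1)}(x,t,k_1)=-e^{\frac{x-x_0}{2}\omega k_1}e^{\frac{T-t}{4}(\omega k_1)^2}\big(\omega^2-\frac{\omega}{k_1^2}\big)\frac{\tilde h_0(x,t,\omega k_1)}{2\pi i}$. Define $m_j^{(1)}(x,t)=\int_{\tilde\Gamma}\cdots\int_{\tilde\Gamma}F^{(1)}(x,t,k_1)F(x,t,k_1,k_2)\cdots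 F(x,t,k_{j-1},k_j)\,dk_1\cdots dk_j$ (contour integrals along oriented $\tilde\Gamma$). *)

theory Defs
  imports "HOL-Analysis.Analysis"
begin

definition omega :: complex where "omega = cis (2 * pi / 3)"

text \<open>Contour integral along the oriented contour
  tilde Gamma = (e^{-pi i/6}, e^{-pi i/6} infinity) union (e^{5 pi i/6}, e^{5 pi i/6} infinity),
  each ray oriented outwards, parametrised by k = c s, s in [1, infinity).\<close>
definition ray_int :: "complex \<Rightarrow> (complex \<Rightarrow> complex) \<Rightarrow> complex" where
  "ray_int c g = (LINT s:{1..}|lborel. g (c * of_real s) * c)"

definition tGamma_int :: "(complex \<Rightarrow> complex) \<Rightarrow> complex" where
  "tGamma_int g = ray_int (cis (- pi / 6)) g + ray_int (cis (5 * pi / 6)) g"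

definition r_tilde :: "complex \<Rightarrow> complex" where
  "r_tilde k = (omega\<^sup>2 - k\<^sup>2) / (1 - omega\<^sup>2 * k\<^sup>2)"

text \<open>f2 on (i, i infinity) and tilde f0 on Gamma_1' union Gamma_4' (0 elsewhere; never used there).\<close>
definition f2_of :: "(complex \<Rightarrow> complex) \<Rightarrow> complex \<Rightarrow> complex" where
  "f2_of f1 k = r_tilde k * cnj (f1 (1 / cnj k))"

definition tf0 :: "(complex \<Rightarrow> complex) \<Rightarrow> complex \<Rightarrow> complex" where
  "tf0 f1 k = (if Re k = 0 \<and> Im k < -1 then f1 (1 / k)
               else if Re k = 0 \<and> Im k > 1 then f2_of f1 k else 0)"

definition th0 :: "(complex \<Rightarrow> complex) \<Rightarrow> real \<Rightarrow> real \<Rightarrow> complex \<Rightarrow> complex" where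
  "th0 f1 x t k = tf0 f1 k * exp (- of_real x / (2 * k) + of_real t / (4 * k\<^sup>2))"

definition FF :: "(complex \<Rightarrow> complex) \<Rightarrow> real \<Rightarrow> real \<Rightarrow> real \<Rightarrow> real \<Rightarrow> complex \<Rightarrow> complex \<Rightarrow> complex" where
  "FF f1 x0 T x t k k1 =
     exp (of_real ((x - x0) / 2) * omega * k1) * exp (of_real ((T - t) / 4) * (omega * k1)\<^sup>2)
     * (omega\<^sup>2 / (omega\<^sup>2 * k1 - k) - (omega / k1\<^sup>2) / (1 / (omega\<^sup>2 * k1) - k))
     * th0 f1 x t (omega * k1) / (2 * pi * \<i>)"

definition FF1 :: "(complex \<Rightarrow> complex) \<Rightarrow> real \<Rightarrow> real \<Rightarrow> real \<Rightarrow> real \<Rightarrow> complex \<Rightarrow> complex" where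
  "FF1 f1 x0 T x t k1 =
     - exp (of_real ((x - x0) / 2) * omega * k1) * exp (of_real ((T - t) / 4) * (omega * k1)\<^sup>2)
     * (omega\<^sup>2 - omega / k1\<^sup>2)
     * th0 f1 x t (omega * k1) / (2 * pi * \<i>)"

primrec GG :: "(complex \<Rightarrow> complex) \<Rightarrow> real \<Rightarrow> real \<Rightarrow> real \<Rightarrow> real \<Rightarrow> nat \<Rightarrow> complex \<Rightarrow> complex" where
  "GG f1 x0 T x t 0 k = 1"
| "GG f1 x0 T x t (Suc n) k = tGamma_int (\<lambda>k'. FF f1 x0 T x t k k' * GG f1 x0 T x t n k')"

definition m1 :: "(complex \<Rightarrow> complex) \<Rightarrow> real \<Rightarrow> real \<Rightarrow> nat \<Rightarrow> real \<Rightarrow> real \<Rightarrow> complex" where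
  "m1 f1 x0 T j x t = tGamma_int (\<lambda>k1. FF1 f1 x0 T x t k1 * GG f1 x0 T x t (j - 1) k1)"

definition smooth_on_real :: "real set \<Rightarrow> (real \<Rightarrow> complex) \<Rightarrow> bool" where
  "smooth_on_real S g \<longleftrightarrow> (\<exists>D. D 0 = g \<and>
     (\<forall>n. \<forall>s\<in>S. (D n has_vector_derivative D (Suc n) s) (at s)))"

end

theory Submission
  imports Defs
begin

(* On the contour tGamma = {c s | c = +-e^(-i pi/6), s >= 1} one has omega k in i R, so the
  x-dependence of the integrands is a unimodular factor exp (x lambda(k)) with
  lambda(k) = omega k / 2 - 1 / (2 omega k) and |lambda(k)| <= |k|.  Write
  F(k, k') = exp (x lambda(k')) K(k, k') w(k').  The weight w(k') vanishes for |k'| <= 2 (f1 vanishes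
  on [i/2, i]) and is bounded by exp (-(T - t) |k'|^2 / 4) |f1 (i / |k'|)| / (2 pi), while
  |K(k, k')| <= 3 / |k'| for |k'| >= 2.  Differentiating under the integral sign, with the Gaussian
  factor providing the dominating function, induction on n gives |G_n| <= q^n and
  |d/dx G_n| <= n A q^(n-1) for the inner iterated integrals, where q is the integral over tGamma of
  the bound for |F| and A the integral of |lambda| times that bound; the hypothesis on f1 gives
  q <= 3 / (pi M) <= 1 / M.  A last integration against F^(1), whose coefficient is at most twice the
  weight, yields the estimate, using 2 / pi <= 1 and 6 / pi^2 <= 1. *)

section \<open>Differentiation under the integral sign\<close>

lemma tendsto_integral_at_dominated:
  fixes s :: "real \<Rightarrow> 'a \<Rightarrow> 'b::{banach, second_countable_topology}"
  assumes s_meas: "\<And>y. s y \<in> borel_measurable M" and f_meas: "f \<in> borel_measurable M"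
    and w_int: "integrable M w"
    and s_tendsto: "\<And>a. ((\<lambda>y. s y a) \<longlongrightarrow> f a) (at x)"
    and s_le: "\<And>y a. y \<noteq> x \<Longrightarrow> norm (s y a) \<le> w a"
  shows "((\<lambda>y. \<integral>a. s y a \<partial>M) \<longlongrightarrow> (\<integral>a. f a \<partial>M)) (at x)"
proof (rule tendsto_at_iff_sequentially[THEN iffD2], intro allI impI)
  fix X :: "nat \<Rightarrow> real"
  assume X: "\<forall>i. X i \<in> UNIV - {x}" and X_lim: "X \<longlonglongrightarrow> x"
  have "(\<lambda>n. \<integral>a. s (X n) a \<partial>M) \<longlonglongrightarrow> (\<integral>a. f a \<partial>M)"
  proof (rule integral_dominated_convergence[where w = w])
    show "AE a in M. (\<lambda>n. s (X n) a) \<longlonglongrightarrow> f a"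
      using s_tendsto X X_lim by (auto simp: tendsto_at_iff_sequentially comp_def)
    show "AE a in M. norm (s (X n) a) \<le> w a" for n
      using X s_le by auto
  qed (use s_meas f_meas w_int in auto)
  then show "((\<lambda>y. \<integral>a. s y a \<partial>M) \<circ> X) \<longlonglongrightarrow> (\<integral>a. f a \<partial>M)"
    by (simp add: comp_def)
qed

lemma norm_linear_remainder_le:
  fixes g g' :: "real \<Rightarrow> 'b::real_normed_vector"
  assumes g_der: "\<And>x. (g has_vector_derivative g' x) (at x)" and g'_le: "\<And>x. norm (g' x) \<le> B"
  shows "norm (g y - g x - (y - x) *\<^sub>R g' x) \<le> 2 * B * norm (y - x)"
proof -
  have "norm (g y - g x) \<le> B * norm (y - x)"
    using g_der g'_le
    by (intro differentiable_bound[OF convex_UNIV, of g "\<lambda>x h. h *\<^sub>R g' x"])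
       (auto simp: has_vector_derivative_def onorm_scaleR_left onorm_id)
  moreover have "norm ((y - x) *\<^sub>R g' x) \<le> B * norm (y - x)"
    using mult_left_mono[OF g'_le abs_ge_zero, of "y - x" x] by (simp add: mult.commute)
  ultimately show ?thesis
    using norm_triangle_ineq4[of "g y - g x" "(y - x) *\<^sub>R g' x"] by simp
qed

lemma has_vector_derivative_integral:
  fixes f f' :: "real \<Rightarrow> 'a \<Rightarrow> 'b::{banach, second_countable_topology}" and w :: "'a \<Rightarrow> real"
  assumes f_int: "\<And>x. integrable M (f x)"
    and f_der: "\<And>x a. ((\<lambda>x. f x a) has_vector_derivative f' x a) (at x)"
    and f'_le: "\<And>x a. norm (f' x a) \<le> w a"
    and w_int: "integrable M w"
    and f'_meas: "\<And>x. f' x \<in> borel_measurable M"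
  shows "((\<lambda>x. \<integral>a. f x a \<partial>M) has_vector_derivative (\<integral>a. f' x a \<partial>M)) (at x)"
proof -
  have f'_int: "integrable M (f' y)" for y
    by (rule Bochner_Integration.integrable_bound[OF w_int f'_meas])
       (auto intro: order_trans[OF f'_le] abs_ge_self)
  define q where "q y a = norm (f y a - f x a - (y - x) *\<^sub>R f' x a) / norm (y - x)" for y a
  have q_le: "norm (q y a) \<le> 2 * w a" if "y \<noteq> x" for y a
    using norm_linear_remainder_le[of "\<lambda>x. f x a" "\<lambda>x. f' x a" "w a" y x] f_der f'_le that
    by (simp add: q_def divide_le_eq)
  have q_tendsto: "((\<lambda>y. q y a) \<longlongrightarrow> 0) (at x)" for a
  proof -
    have "((\<lambda>x. f x a) has_vector_derivative f' x a) (at x)"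
      by (rule f_der)
    then show ?thesis
      unfolding has_vector_derivative_def has_derivative_iff_norm q_def by simp
  qed
  have integral_q: "norm (integral\<^sup>L M (f y) - integral\<^sup>L M (f x) - (y - x) *\<^sub>R integral\<^sup>L M (f' x)) / norm (y - x)
      \<le> integral\<^sup>L M (q y)" for y
  proof -
    have "integral\<^sup>L M (f y) - integral\<^sup>L M (f x) - (y - x) *\<^sub>R integral\<^sup>L M (f' x)
        = (\<integral>a. f y a - f x a - (y - x) *\<^sub>R f' x a \<partial>M)"
      using f_int f'_int by simp
    then show ?thesis
      unfolding q_def by (simp add: divide_right_mono integral_norm_bound)
  qed
  have "((\<lambda>y. integral\<^sup>L M (q y)) \<longlongrightarrow> (\<integral>a. 0 \<partial>M)) (at x)"
    using f_int f'_int w_int q_tendsto q_le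
    by (intro tendsto_integral_at_dominated[where w = "\<lambda>a. 2 * w a"]) (auto simp: q_def)
  then have integral_q_tendsto: "((\<lambda>y. integral\<^sup>L M (q y)) \<longlongrightarrow> 0) (at x)"
    by simp
  have "((\<lambda>y. norm (integral\<^sup>L M (f y) - integral\<^sup>L M (f x) - (y - x) *\<^sub>R integral\<^sup>L M (f' x)) / norm (y - x))
      \<longlongrightarrow> 0) (at x)"
    by (rule tendsto_sandwich[OF _ _ tendsto_const integral_q_tendsto])
       (auto intro!: always_eventually integral_q[unfolded real_norm_def])
  then show ?thesis
    unfolding has_vector_derivative_def has_derivative_iff_norm
    by (auto intro: bounded_linear_scaleR_left)
qed

lemma has_vector_derivative_integral_mult:
  fixes K K' G G' :: "real \<Rightarrow> 'a \<Rightarrow> 'b::{banach, real_normed_algebra, second_countable_topology}"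
  assumes K_der: "\<And>x a. ((\<lambda>x. K x a) has_vector_derivative K' x a) (at x)"
    and G_der: "\<And>x a. ((\<lambda>x. G x a) has_vector_derivative G' x a) (at x)"
    and K_le: "\<And>x a. norm (K x a) \<le> B a" and K'_le: "\<And>x a. norm (K' x a) \<le> B' a"
    and G_le: "\<And>x a. norm (G x a) \<le> g" and G'_le: "\<And>x a. norm (G' x a) \<le> d"
    and B_int: "integrable M B" and B'_int: "integrable M B'"
    and [measurable]: "\<And>x. K x \<in> borel_measurable M" "\<And>x. K' x \<in> borel_measurable M"
      "\<And>x. G x \<in> borel_measurable M" "\<And>x. G' x \<in> borel_measurable M"
  shows "((\<lambda>x. \<integral>a. K x a * G x a \<partial>M) has_vector_derivative (\<integral>a. K x a * G' x a + K' x a * G x a \<partial>M)) (at x)"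
    and "norm (\<integral>a. K x a * G x a \<partial>M) \<le> g * (\<integral>a. B a \<partial>M)"
    and "norm (\<integral>a. K x a * G' x a + K' x a * G x a \<partial>M) \<le> g * (\<integral>a. B' a \<partial>M) + d * (\<integral>a. B a \<partial>M)"
proof -
  have B: "0 \<le> B a" and B': "0 \<le> B' a" for a
    using K_le K'_le norm_ge_zero order_trans by blast+
  have prod_le: "norm (K x a * G x a) \<le> g * B a" for x a
    using order_trans[OF norm_mult_ineq mult_mono[OF K_le G_le B norm_ge_zero]] by (simp add: mult.commute)
  have deriv_le: "norm (K x a * G' x a + K' x a * G x a) \<le> g * B' a + d * B a" for x a
    using norm_triangle_ineq[of "K x a * G' x a" "K' x a * G x a"]
      order_trans[OF norm_mult_ineq mult_mono[OF K_le G'_le B norm_ge_zero], of x a x a]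
      order_trans[OF norm_mult_ineq mult_mono[OF K'_le G_le B' norm_ge_zero], of x a x a]
    by (simp add: mult.commute)
  have bound_int: "integrable M (\<lambda>a. g * B a)" "integrable M (\<lambda>a. g * B' a + d * B a)"
    using B_int B'_int by auto
  have prod_int: "integrable M (\<lambda>a. K x a * G x a)" for x
    by (rule Bochner_Integration.integrable_bound[OF bound_int(1)])
       (auto intro: order_trans[OF prod_le] abs_ge_self)
  have deriv_int: "integrable M (\<lambda>a. K x a * G' x a + K' x a * G x a)" for x
    by (rule Bochner_Integration.integrable_bound[OF bound_int(2)])
       (auto intro: order_trans[OF deriv_le] abs_ge_self)
  show "((\<lambda>x. \<integral>a. K x a * G x a \<partial>M) has_vector_derivative (\<integral>a. K x a * G' x a + K' x a * G x a \<partial>M)) (at x)"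
    by (rule has_vector_derivative_integral[OF prod_int _ deriv_le bound_int(2)])
       (auto intro: has_vector_derivative_mult K_der G_der)
  have "norm (\<integral>a. K x a * G x a \<partial>M) \<le> (\<integral>a. g * B a \<partial>M)"
    using prod_int bound_int prod_le by (intro order_trans[OF integral_norm_bound integral_mono]) auto
  then show "norm (\<integral>a. K x a * G x a \<partial>M) \<le> g * (\<integral>a. B a \<partial>M)"
    by simp
  have "norm (\<integral>a. K x a * G' x a + K' x a * G x a \<partial>M) \<le> (\<integral>a. g * B' a + d * B a \<partial>M)"
    using deriv_int bound_int deriv_le by (intro order_trans[OF integral_norm_bound integral_mono]) auto
  then show "norm (\<integral>a. K x a * G' x a + K' x a * G x a \<partial>M) \<le> g * (\<integral>a. B' a \<partial>M) + d * (\<integral>a. B a \<partial>M)"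
    using B_int B'_int by simp
qed

lemma has_vector_derivative_exp_of_real_mult:
  fixes z :: "'a::{real_normed_field, banach}"
  shows "((\<lambda>x. exp (of_real x * z)) has_vector_derivative z * exp (of_real x * z)) (at x)"
proof -
  have "((\<lambda>w. exp (w * z)) has_field_derivative exp (of_real x * z) * z) (at (of_real x))"
    by (auto intro!: derivative_eq_intros)
  from has_vector_derivative_real_field[OF this] show ?thesis
    by (simp add: mult.commute)
qed

section \<open>The contour and the factorisation of the integrands\<close>

definition ray_dir :: complex where "ray_dir = cis (- pi / 6)"

lemma omega_eq_Complex: "omega = Complex (- 1 / 2) (sqrt 3 / 2)"
proof -
  have "2 * pi / 3 = pi - pi / 3" by simp
  then show ?thesis
    unfolding omega_def cis.ctr by (simp only: cos_pi_minus sin_pi_minus cos_60 sin_60) simp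
qed

lemma ray_dir_eq_Complex: "ray_dir = Complex (sqrt 3 / 2) (- 1 / 2)"
  unfolding ray_dir_def cis.ctr by (simp add: cos_30 sin_30)

lemma norm_omega [simp]: "norm omega = 1"
  by (simp add: omega_def)

lemma norm_ray_dir [simp]: "norm ray_dir = 1"
  by (simp add: ray_dir_def)

lemma omega_mult_ray_dir: "omega * ray_dir = \<i>"
  by (simp add: omega_eq_Complex ray_dir_eq_Complex complex_eq_iff field_simps)

lemma tGamma_int_eq_rays: "tGamma_int g = ray_int ray_dir g + ray_int (- ray_dir) g"
proof -
  have "cis (5 * pi / 6) = cis (- pi / 6) * cis pi"
    unfolding cis_mult by (simp add: field_simps)
  then show ?thesis
    unfolding tGamma_int_def ray_dir_def by simp
qed

lemma ray_point_real_multiple: "c \<in> {ray_dir, - ray_dir} \<Longrightarrow> \<exists>u. c * of_real s = of_real u * ray_dir \<and> \<bar>u\<bar> = \<bar>s\<bar>"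
  by (auto intro: exI[of _ s] exI[of _ "- s"])

lemma omega_mult_ray_point: "omega * (of_real u * ray_dir) = of_real u * \<i>"
  by (metis omega_mult_ray_dir mult.left_commute)

definition x_exponent :: "complex \<Rightarrow> complex" where
  "x_exponent k = omega * k / 2 - 1 / (2 * omega * k)"

definition F_kernel :: "complex \<Rightarrow> complex \<Rightarrow> complex" where
  "F_kernel k k1 = omega\<^sup>2 / (omega\<^sup>2 * k1 - k) - (omega / k1\<^sup>2) / (1 / (omega\<^sup>2 * k1) - k)"

definition ray_weight :: "(complex \<Rightarrow> complex) \<Rightarrow> real \<Rightarrow> real \<Rightarrow> real \<Rightarrow> complex \<Rightarrow> complex" where
  "ray_weight f1 x0 T t k = exp (- of_real x0 * (omega * k / 2)) * exp (of_real ((T - t) / 4) * (omega * k)\<^sup>2)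
     * tf0 f1 (omega * k) * exp (of_real t / (4 * (omega * k)\<^sup>2)) / (2 * pi * \<i>)"

lemma exp_split_x_dependence:
  "exp (of_real ((x - x0) / 2) * omega * k) * exp (- of_real x / (2 * (omega * k)) + c)
    = exp (of_real x * x_exponent k) * exp (- of_real x0 * (omega * k / 2)) * exp c"
  unfolding exp_add[symmetric] x_exponent_def
  by (rule arg_cong[where f = exp]) (simp add: algebra_simps diff_divide_distrib)

lemma FF_eq:
  "FF f1 x0 T x t k k1 = exp (of_real x * x_exponent k1) * (F_kernel k k1 * ray_weight f1 x0 T t k1)"
proof -
  have "FF f1 x0 T x t k k1 = (exp (of_real ((x - x0) / 2) * omega * k1)
        * exp (- of_real x / (2 * (omega * k1)) + of_real t / (4 * (omega * k1)\<^sup>2)))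
      * (exp (of_real ((T - t) / 4) * (omega * k1)\<^sup>2) * F_kernel k k1 * tf0 f1 (omega * k1) / (2 * pi * \<i>))"
    unfolding FF_def th0_def F_kernel_def by (simp add: ac_simps)
  then show ?thesis
    unfolding exp_split_x_dependence ray_weight_def by (simp add: ac_simps)
qed

lemma FF1_eq:
  "FF1 f1 x0 T x t k1 = exp (of_real x * x_exponent k1) * ((omega / k1\<^sup>2 - omega\<^sup>2) * ray_weight f1 x0 T t k1)"
proof -
  have "FF1 f1 x0 T x t k1 = (exp (of_real ((x - x0) / 2) * omega * k1)
        * exp (- of_real x / (2 * (omega * k1)) + of_real t / (4 * (omega * k1)\<^sup>2)))
      * (exp (of_real ((T - t) / 4) * (omega * k1)\<^sup>2) * (omega / k1\<^sup>2 - omega\<^sup>2) * tf0 f1 (omega * k1) / (2 * pi * \<i>))"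
    unfolding FF1_def th0_def by (simp add: algebra_simps)
  then show ?thesis
    unfolding exp_split_x_dependence ray_weight_def by (simp add: ac_simps)
qed

lemma x_exponent_ray_point:
  assumes "u \<noteq> 0"
  shows "x_exponent (of_real u * ray_dir) = \<i> * of_real ((u + 1 / u) / 2)"
  using assms unfolding x_exponent_def mult.assoc[of 2] omega_mult_ray_point
  by (simp add: field_simps)

lemma Re_x_exponent_ray_point: "u \<noteq> 0 \<Longrightarrow> Re (x_exponent (of_real u * ray_dir)) = 0"
  by (simp add: x_exponent_ray_point)

lemma norm_x_exponent_le:
  assumes "1 \<le> \<bar>u\<bar>"
  shows "norm (x_exponent (of_real u * ray_dir)) \<le> \<bar>u\<bar>"
proof -
  have "\<bar>1 / u\<bar> \<le> \<bar>u\<bar>"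
    using assms by (simp add: abs_divide order_trans[OF divide_le_eq_1_pos[THEN iffD2]])
  moreover have "\<bar>u + 1 / u\<bar> \<le> \<bar>u\<bar> + \<bar>1 / u\<bar>"
    by (rule abs_triangle_ineq)
  moreover have "u \<noteq> 0"
    using assms by auto
  ultimately show ?thesis
    unfolding x_exponent_ray_point[OF \<open>u \<noteq> 0\<close>] norm_mult norm_ii norm_of_real
    by simp
qed

lemma ray_point_bounds:
  assumes "c \<in> {ray_dir, - ray_dir}" and "1 \<le> s"
  shows "Re (x_exponent (c * of_real s)) = 0"
    and "norm (x_exponent (c * of_real s)) \<le> s"
    and "norm c = 1"
proof -
  obtain u where u: "c * of_real s = of_real u * ray_dir" "\<bar>u\<bar> = s"
    using ray_point_real_multiple[OF assms(1)] assms(2) by fastforce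
  then show "Re (x_exponent (c * of_real s)) = 0"
    and "norm (x_exponent (c * of_real s)) \<le> s"
    using assms(2) Re_x_exponent_ray_point[of u] norm_x_exponent_le[of u] by auto
  show "norm c = 1"
    using assms(1) by auto
qed

lemma borel_measurable_x_exponent [measurable]: "x_exponent \<in> borel_measurable borel"
  unfolding x_exponent_def by measurable

lemma le_cmod_of_square_le: "0 \<le> r \<Longrightarrow> r\<^sup>2 \<le> Re z ^ 2 + Im z ^ 2 \<Longrightarrow> r \<le> norm z"
  by (simp add: cmod_def real_le_rsqrt)

lemma norm_omega2_ray_point_diff_ge:
  "\<bar>v\<bar> / 2 \<le> norm (omega\<^sup>2 * (of_real v * ray_dir) - of_real u * ray_dir)"
proof (rule le_cmod_of_square_le)
  let ?z = "omega\<^sup>2 * (of_real v * ray_dir) - of_real u * ray_dir"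
  have "Re ?z ^ 2 + Im ?z ^ 2 = (u + v / 2)\<^sup>2 + 3 / 4 * v\<^sup>2"
    by (simp add: omega_eq_Complex ray_dir_eq_Complex power2_eq_square field_simps)
  then show "(\<bar>v\<bar> / 2)\<^sup>2 \<le> Re ?z ^ 2 + Im ?z ^ 2"
    by (simp add: power_divide)
qed simp

(* The difference equals -(u + 1/v) ray_dir and vanishes at u = -1/v, so it is bounded away from 0 only
  for |v| >= 2; this is where the vanishing of f1 on [i/2, i] enters. *)
lemma norm_inverse_ray_point_diff_ge:
  assumes u: "1 \<le> \<bar>u\<bar>" and v: "2 \<le> \<bar>v\<bar>"
  shows "1 / 2 \<le> norm (1 / (omega\<^sup>2 * (of_real v * ray_dir)) - of_real u * ray_dir)"
proof -
  have "omega\<^sup>2 * ray_dir\<^sup>2 = -1"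
    by (simp add: power_mult_distrib[symmetric] omega_mult_ray_dir)
  then have "(omega\<^sup>2 * (of_real v * ray_dir)) * (- of_real (1 / v) * ray_dir) = 1"
    using v by (simp add: field_simps power2_eq_square)
  then have "1 / (omega\<^sup>2 * (of_real v * ray_dir)) = - of_real (1 / v) * ray_dir"
    by (metis inverse_unique inverse_eq_divide)
  then have "1 / (omega\<^sup>2 * (of_real v * ray_dir)) - of_real u * ray_dir = - (of_real (u + 1 / v) * ray_dir)"
    by (simp add: algebra_simps)
  then have "norm (1 / (omega\<^sup>2 * (of_real v * ray_dir)) - of_real u * ray_dir) = \<bar>u + 1 / v\<bar>"
    by (simp only: norm_minus_cancel norm_mult norm_of_real norm_ray_dir mult_1_right)
  moreover have "\<bar>1 / v\<bar> \<le> 1 / 2"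
    using v by (simp add: abs_divide divide_le_eq)
  ultimately show ?thesis
    using u abs_triangle_ineq2[of u "- (1 / v)"] by simp
qed

lemma norm_F_kernel_le:
  assumes u: "1 \<le> \<bar>u\<bar>" and v: "2 \<le> \<bar>v\<bar>"
  shows "norm (F_kernel (of_real u * ray_dir) (of_real v * ray_dir)) \<le> 3 / \<bar>v\<bar>"
proof -
  let ?k = "of_real u * ray_dir" and ?k1 = "of_real v * ray_dir"
  have first: "norm (omega\<^sup>2 / (omega\<^sup>2 * ?k1 - ?k)) \<le> 2 / \<bar>v\<bar>"
    using norm_omega2_ray_point_diff_ge[of v u] v by (simp add: norm_divide norm_power divide_le_eq field_simps)
  have "norm (omega / ?k1\<^sup>2) / norm (1 / (omega\<^sup>2 * ?k1) - ?k) \<le> (1 / v\<^sup>2) / (1 / 2)"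
    using norm_inverse_ray_point_diff_ge[OF u v] by (intro frac_le) (auto simp: norm_divide norm_mult norm_power)
  then have second: "norm ((omega / ?k1\<^sup>2) / (1 / (omega\<^sup>2 * ?k1) - ?k)) \<le> 2 / v\<^sup>2"
    unfolding norm_divide[of "omega / ?k1\<^sup>2"] by (simp only: divide_divide_eq_right)
  have "2 / v\<^sup>2 = (2 / \<bar>v\<bar>) * (1 / \<bar>v\<bar>)"
    by (simp add: power2_eq_square)
  also have "\<dots> \<le> 1 * (1 / \<bar>v\<bar>)"
    using v by (intro mult_right_mono) auto
  finally show ?thesis
    using norm_triangle_ineq4 first second unfolding F_kernel_def by (smt (verit) add_divide_distrib)
qed

lemma norm_r_tilde_imag_le: "norm (r_tilde (of_real v * \<i>)) \<le> 1"
proof -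
  have num: "omega\<^sup>2 - (of_real v * \<i>)\<^sup>2 = Complex (v\<^sup>2 - 1 / 2) (- sqrt 3 / 2)"
    by (simp add: omega_eq_Complex complex_eq_iff power2_eq_square field_simps)
  have den: "1 - omega\<^sup>2 * (of_real v * \<i>)\<^sup>2 = Complex (1 - v\<^sup>2 / 2) (- sqrt 3 / 2 * v\<^sup>2)"
    by (simp add: omega_eq_Complex complex_eq_iff power2_eq_square field_simps)
  have "norm (Complex (v\<^sup>2 - 1 / 2) (- sqrt 3 / 2)) = norm (Complex (1 - v\<^sup>2 / 2) (- sqrt 3 / 2 * v\<^sup>2))"
    unfolding cmod_def by (simp add: power_mult_distrib power_divide power2_eq_square field_simps)
  then show ?thesis
    unfolding r_tilde_def num den norm_divide by (simp add: divide_le_eq_1)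
qed

lemma tf0_imag:
  "tf0 f1 (of_real v * \<i>) =
    (if 1 < v then r_tilde (of_real v * \<i>) * cnj (f1 (\<i> / of_real v))
     else if v < -1 then f1 (\<i> / of_real (- v)) else 0)"
proof -
  have "1 / cnj (of_real v * \<i>) = \<i> / of_real v" "1 / (of_real v * \<i>) = \<i> / of_real (- v)"
    by (cases "v = 0"; simp add: field_simps)+
  then show ?thesis
    by (simp add: tf0_def f2_of_def)
qed

lemma norm_tf0_imag_le: "norm (tf0 f1 (of_real v * \<i>)) \<le> norm (f1 (\<i> / of_real \<bar>v\<bar>))"
  using norm_r_tilde_imag_le[of v]
  by (auto simp: tf0_imag norm_mult intro: mult_left_le_one_le)

definition decay :: "(complex \<Rightarrow> complex) \<Rightarrow> real \<Rightarrow> real \<Rightarrow> real" where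
  "decay f1 \<tau> s = exp (- \<tau> * s\<^sup>2) * norm (f1 (\<i> / of_real s))"

lemma norm_ray_weight_le:
  assumes "0 \<le> t" and "1 \<le> \<bar>u\<bar>"
  shows "norm (ray_weight f1 x0 T t (of_real u * ray_dir)) \<le> decay f1 ((T - t) / 4) \<bar>u\<bar> / (2 * pi)"
proof -
  have sq: "(of_real u * \<i>)\<^sup>2 = - of_real (u\<^sup>2)"
    by (simp add: power_mult_distrib)
  have "norm (ray_weight f1 x0 T t (of_real u * ray_dir))
      = exp (- ((T - t) / 4) * u\<^sup>2) * norm (tf0 f1 (of_real u * \<i>)) * exp (- (t / (4 * u\<^sup>2))) / (2 * pi)"
    unfolding ray_weight_def omega_mult_ray_point sq
    by (simp add: norm_mult norm_divide norm_exp_eq_Re del: of_real_power)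
  also have "\<dots> \<le> exp (- ((T - t) / 4) * u\<^sup>2) * norm (tf0 f1 (of_real u * \<i>)) * 1 / (2 * pi)"
    using assms by (intro divide_right_mono mult_left_mono) auto
  also have "\<dots> \<le> decay f1 ((T - t) / 4) \<bar>u\<bar> / (2 * pi)"
    unfolding decay_def by (intro divide_right_mono mult_left_mono) (auto intro: norm_tf0_imag_le)
  finally show ?thesis .
qed

lemma norm_FF1_coefficient_le:
  assumes "0 \<le> t" and c: "c \<in> {ray_dir, - ray_dir}" and s: "1 \<le> s"
  shows "norm ((omega / (c * of_real s)\<^sup>2 - omega\<^sup>2) * ray_weight f1 x0 T t (c * of_real s))
    \<le> decay f1 ((T - t) / 4) s / pi"
proof -
  obtain v where v: "c * of_real s = of_real v * ray_dir" "\<bar>v\<bar> = s"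
    using ray_point_real_multiple[OF c] s by fastforce
  then have "1 \<le> v\<^sup>2"
    using abs_le_square_iff[of 1 v] s by simp
  then have "norm (omega / (of_real v * ray_dir)\<^sup>2) \<le> 1"
    by (simp add: norm_divide norm_mult norm_power divide_le_eq_1)
  then have "norm (omega / (of_real v * ray_dir)\<^sup>2 - omega\<^sup>2) \<le> 2"
    using norm_triangle_ineq4[of "omega / (of_real v * ray_dir)\<^sup>2" "omega\<^sup>2"] by (simp add: norm_power)
  then have "norm ((omega / (of_real v * ray_dir)\<^sup>2 - omega\<^sup>2) * ray_weight f1 x0 T t (of_real v * ray_dir))
      \<le> 2 * (decay f1 ((T - t) / 4) \<bar>v\<bar> / (2 * pi))"
    unfolding norm_mult using assms v by (intro mult_mono norm_ray_weight_le) auto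
  then show ?thesis
    unfolding v by simp
qed

section \<open>One integration along the contour\<close>

lemma ray_kernel_bounds:
  assumes c: "c \<in> {ray_dir, - ray_dir}" and C_le: "\<And>s. 1 \<le> s \<Longrightarrow> norm (C (c * of_real s)) \<le> B s"
  shows "norm (exp (of_real x * x_exponent (c * of_real s)) * (indicator {1..} s *\<^sub>R C (c * of_real s) * c))
      \<le> indicator {1..} s * B s"
    and "norm (x_exponent (c * of_real s)
        * (exp (of_real x * x_exponent (c * of_real s)) * (indicator {1..} s *\<^sub>R C (c * of_real s) * c)))
      \<le> indicator {1..} s * (s * B s)"
proof -
  let ?K = "exp (of_real x * x_exponent (c * of_real s)) * (indicator {1..} s *\<^sub>R C (c * of_real s) * c)"
  show K_le: "norm ?K \<le> indicator {1..} s * B s"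
  proof (cases "1 \<le> s")
    case True
    then show ?thesis
      by (simp add: norm_mult ray_point_bounds[OF c True] C_le[OF True])
  qed simp
  show "norm (x_exponent (c * of_real s) * ?K) \<le> indicator {1..} s * (s * B s)"
  proof (cases "1 \<le> s")
    case True
    then show ?thesis
      using K_le ray_point_bounds(2)[OF c True] unfolding norm_mult
      by (auto intro: mult_mono order_trans[OF _ mult_right_mono])
  qed simp
qed

lemma ray_int_step:
  fixes C :: "complex \<Rightarrow> complex" and G G' :: "real \<Rightarrow> complex \<Rightarrow> complex" and B :: "real \<Rightarrow> real"
  assumes c: "c \<in> {ray_dir, - ray_dir}"
    and C_le: "\<And>s. 1 \<le> s \<Longrightarrow> norm (C (c * of_real s)) \<le> B s"
    and C_meas: "(\<lambda>s. indicator {1..} s *\<^sub>R C (c * of_real s)) \<in> borel_measurable borel"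
    and B_int: "integrable lborel (\<lambda>s. indicator {1..} s * B s)"
    and sB_int: "integrable lborel (\<lambda>s. indicator {1..} s * (s * B s))"
    and G_der: "\<And>x s. 1 \<le> s \<Longrightarrow> ((\<lambda>x. G x (c * of_real s)) has_vector_derivative G' x (c * of_real s)) (at x)"
    and G_le: "\<And>x s. 1 \<le> s \<Longrightarrow> norm (G x (c * of_real s)) \<le> g"
    and G'_le: "\<And>x s. 1 \<le> s \<Longrightarrow> norm (G' x (c * of_real s)) \<le> d"
    and G_meas: "\<And>x. (\<lambda>s. G x (c * of_real s)) \<in> borel_measurable borel"
    and G'_meas: "\<And>x. (\<lambda>s. G' x (c * of_real s)) \<in> borel_measurable borel"
  shows "((\<lambda>x. ray_int c (\<lambda>k. exp (of_real x * x_exponent k) * C k * G x k)) has_vector_derivative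
      ray_int c (\<lambda>k. exp (of_real x * x_exponent k) * C k * (x_exponent k * G x k + G' x k))) (at x)"
    and "norm (ray_int c (\<lambda>k. exp (of_real x * x_exponent k) * C k * G x k))
      \<le> g * (\<integral>s. indicator {1..} s * B s \<partial>lborel)"
    and "norm (ray_int c (\<lambda>k. exp (of_real x * x_exponent k) * C k * (x_exponent k * G x k + G' x k)))
      \<le> g * (\<integral>s. indicator {1..} s * (s * B s) \<partial>lborel) + d * (\<integral>s. indicator {1..} s * B s \<partial>lborel)"
proof -
  define K where "K x s = exp (of_real x * x_exponent (c * of_real s)) * (indicator {1..} s *\<^sub>R C (c * of_real s) * c)"
    for x s
  define K' where "K' x s = x_exponent (c * of_real s) * K x s" for x s
  define Gc where "Gc x s = indicator {1..} s *\<^sub>R G x (c * of_real s)" for x s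
  define Gc' where "Gc' x s = indicator {1..} s *\<^sub>R G' x (c * of_real s)" for x s
  have "0 \<le> g" "0 \<le> d"
    using G_le[of 1] G'_le[of 1] norm_ge_zero order_trans by blast+
  then have Gc_le: "norm (Gc x s) \<le> g" and Gc'_le: "norm (Gc' x s) \<le> d" for x s
    using G_le G'_le by (auto simp: Gc_def Gc'_def indicator_def)
  have K_le: "norm (K x s) \<le> indicator {1..} s * B s" for x s
    unfolding K_def using c C_le by (rule ray_kernel_bounds(1))
  have K'_le: "norm (K' x s) \<le> indicator {1..} s * (s * B s)" for x s
    unfolding K'_def K_def using c C_le by (rule ray_kernel_bounds(2))
  have K_der: "((\<lambda>x. K x s) has_vector_derivative K' x s) (at x)" for x s
    unfolding K_def K'_def mult.assoc[symmetric]
    by (intro has_vector_derivative_mult_left has_vector_derivative_exp_of_real_mult)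
  have Gc_der: "((\<lambda>x. Gc x s) has_vector_derivative Gc' x s) (at x)" for x s
    using G_der by (cases "1 \<le> s") (auto simp: Gc_def Gc'_def)
  note [measurable] = C_meas G_meas G'_meas
  have meas: "K x \<in> borel_measurable lborel" "K' x \<in> borel_measurable lborel"
    "Gc x \<in> borel_measurable lborel" "Gc' x \<in> borel_measurable lborel" for x
    unfolding K'_def K_def Gc_def Gc'_def by measurable
  note step = has_vector_derivative_integral_mult[OF K_der Gc_der K_le K'_le Gc_le Gc'_le B_int sB_int meas]
  have "ray_int c (\<lambda>k. exp (of_real x * x_exponent k) * C k * G x k) = (\<integral>s. K x s * Gc x s \<partial>lborel)" for x
    unfolding ray_int_def set_lebesgue_integral_def K_def Gc_def
    by (intro Bochner_Integration.integral_cong) (auto simp: indicator_def ac_simps)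
  moreover have "ray_int c (\<lambda>k. exp (of_real x * x_exponent k) * C k * (x_exponent k * G x k + G' x k))
      = (\<integral>s. K x s * Gc' x s + K' x s * Gc x s \<partial>lborel)" for x
    unfolding ray_int_def set_lebesgue_integral_def K'_def K_def Gc_def Gc'_def
    by (intro Bochner_Integration.integral_cong) (auto simp: indicator_def algebra_simps)
  ultimately show
    "((\<lambda>x. ray_int c (\<lambda>k. exp (of_real x * x_exponent k) * C k * G x k)) has_vector_derivative
      ray_int c (\<lambda>k. exp (of_real x * x_exponent k) * C k * (x_exponent k * G x k + G' x k))) (at x)"
    "norm (ray_int c (\<lambda>k. exp (of_real x * x_exponent k) * C k * G x k))
      \<le> g * (\<integral>s. indicator {1..} s * B s \<partial>lborel)"
    "norm (ray_int c (\<lambda>k. exp (of_real x * x_exponent k) * C k * (x_exponent k * G x k + G' x k)))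
      \<le> g * (\<integral>s. indicator {1..} s * (s * B s) \<partial>lborel) + d * (\<integral>s. indicator {1..} s * B s \<partial>lborel)"
    using step by simp_all
qed

lemma tGamma_int_step:
  fixes C :: "complex \<Rightarrow> complex" and G G' :: "real \<Rightarrow> complex \<Rightarrow> complex" and B :: "real \<Rightarrow> real"
  assumes C_le: "\<And>c s. c \<in> {ray_dir, - ray_dir} \<Longrightarrow> 1 \<le> s \<Longrightarrow> norm (C (c * of_real s)) \<le> B s"
    and C_meas: "\<And>c. c \<in> {ray_dir, - ray_dir} \<Longrightarrow> (\<lambda>s. indicator {1..} s *\<^sub>R C (c * of_real s)) \<in> borel_measurable borel"
    and B_int: "integrable lborel (\<lambda>s. indicator {1..} s * B s)"
    and sB_int: "integrable lborel (\<lambda>s. indicator {1..} s * (s * B s))"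
    and G_der: "\<And>c x s. c \<in> {ray_dir, - ray_dir} \<Longrightarrow> 1 \<le> s \<Longrightarrow>
      ((\<lambda>x. G x (c * of_real s)) has_vector_derivative G' x (c * of_real s)) (at x)"
    and G_le: "\<And>c x s. c \<in> {ray_dir, - ray_dir} \<Longrightarrow> 1 \<le> s \<Longrightarrow> norm (G x (c * of_real s)) \<le> g"
    and G'_le: "\<And>c x s. c \<in> {ray_dir, - ray_dir} \<Longrightarrow> 1 \<le> s \<Longrightarrow> norm (G' x (c * of_real s)) \<le> d"
    and G_meas: "\<And>c x. c \<in> {ray_dir, - ray_dir} \<Longrightarrow> (\<lambda>s. G x (c * of_real s)) \<in> borel_measurable borel"
    and G'_meas: "\<And>c x. c \<in> {ray_dir, - ray_dir} \<Longrightarrow> (\<lambda>s. G' x (c * of_real s)) \<in> borel_measurable borel"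
  shows "((\<lambda>x. tGamma_int (\<lambda>k. exp (of_real x * x_exponent k) * C k * G x k)) has_vector_derivative
      tGamma_int (\<lambda>k. exp (of_real x * x_exponent k) * C k * (x_exponent k * G x k + G' x k))) (at x)"
    and "norm (tGamma_int (\<lambda>k. exp (of_real x * x_exponent k) * C k * G x k))
      \<le> 2 * g * (\<integral>s. indicator {1..} s * B s \<partial>lborel)"
    and "norm (tGamma_int (\<lambda>k. exp (of_real x * x_exponent k) * C k * (x_exponent k * G x k + G' x k)))
      \<le> 2 * (g * (\<integral>s. indicator {1..} s * (s * B s) \<partial>lborel) + d * (\<integral>s. indicator {1..} s * B s \<partial>lborel))"
proof -
  have c1: "ray_dir \<in> {ray_dir, - ray_dir}" and c2: "- ray_dir \<in> {ray_dir, - ray_dir}"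
    by simp_all
  note ray1 = ray_int_step[OF c1 C_le[OF c1] C_meas[OF c1] B_int sB_int G_der[OF c1] G_le[OF c1] G'_le[OF c1]
      G_meas[OF c1] G'_meas[OF c1], of x]
  note ray2 = ray_int_step[OF c2 C_le[OF c2] C_meas[OF c2] B_int sB_int G_der[OF c2] G_le[OF c2] G'_le[OF c2]
      G_meas[OF c2] G'_meas[OF c2], of x]
  show "((\<lambda>x. tGamma_int (\<lambda>k. exp (of_real x * x_exponent k) * C k * G x k)) has_vector_derivative
      tGamma_int (\<lambda>k. exp (of_real x * x_exponent k) * C k * (x_exponent k * G x k + G' x k))) (at x)"
    unfolding tGamma_int_eq_rays by (intro has_vector_derivative_add ray1(1) ray2(1))
  show "norm (tGamma_int (\<lambda>k. exp (of_real x * x_exponent k) * C k * G x k))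
      \<le> 2 * g * (\<integral>s. indicator {1..} s * B s \<partial>lborel)"
    unfolding tGamma_int_eq_rays using order_trans[OF norm_triangle_ineq add_mono[OF ray1(2) ray2(2)]] by simp
  show "norm (tGamma_int (\<lambda>k. exp (of_real x * x_exponent k) * C k * (x_exponent k * G x k + G' x k)))
      \<le> 2 * (g * (\<integral>s. indicator {1..} s * (s * B s) \<partial>lborel) + d * (\<integral>s. indicator {1..} s * B s \<partial>lborel))"
    unfolding tGamma_int_eq_rays using order_trans[OF norm_triangle_ineq add_mono[OF ray1(3) ray2(3)]] by simp
qed

section \<open>The iterated integrals and their measurability\<close>

primrec GG_dx :: "(complex \<Rightarrow> complex) \<Rightarrow> real \<Rightarrow> real \<Rightarrow> real \<Rightarrow> real \<Rightarrow> nat \<Rightarrow> complex \<Rightarrow> complex" where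
  "GG_dx f1 x0 T x t 0 k = 0"
| "GG_dx f1 x0 T x t (Suc n) k =
    tGamma_int (\<lambda>k'. FF f1 x0 T x t k k' * (x_exponent k' * GG f1 x0 T x t n k' + GG_dx f1 x0 T x t n k'))"

lemma GG_Suc_eq:
  "GG f1 x0 T x t (Suc n) k =
    tGamma_int (\<lambda>k'. exp (of_real x * x_exponent k') * (F_kernel k k' * ray_weight f1 x0 T t k')
      * GG f1 x0 T x t n k')"
  by (simp add: FF_eq)

lemma GG_dx_Suc_eq:
  "GG_dx f1 x0 T x t (Suc n) k =
    tGamma_int (\<lambda>k'. exp (of_real x * x_exponent k') * (F_kernel k k' * ray_weight f1 x0 T t k')
      * (x_exponent k' * GG f1 x0 T x t n k' + GG_dx f1 x0 T x t n k'))"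
  by (simp add: FF_eq)

lemma borel_measurable_ray_int_F_kernel:
  assumes [measurable]: "(\<lambda>s. indicator {1..} s *\<^sub>R W (c' * of_real s)) \<in> borel_measurable borel"
  shows "(\<lambda>s. ray_int c' (\<lambda>k. F_kernel (c * of_real s) k * W k)) \<in> borel_measurable borel"
proof -
  have "(\<lambda>s. ray_int c' (\<lambda>k. F_kernel (c * of_real s) k * W k))
      = (\<lambda>s. \<integral>s'. F_kernel (c * of_real s) (c' * of_real s') * (indicator {1..} s' *\<^sub>R W (c' * of_real s')) * c'
          \<partial>lborel)"
    unfolding ray_int_def set_lebesgue_integral_def
    by (intro ext Bochner_Integration.integral_cong) (auto simp: indicator_def)
  then show ?thesis
    unfolding F_kernel_def by (simp only:) measurable
qed

lemma borel_measurable_cnj [measurable]: "cnj \<in> borel_measurable borel"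
  by (intro borel_measurable_continuous_onI continuous_intros)

context
  fixes f1 :: "complex \<Rightarrow> complex"
  assumes f1_vanishes: "\<forall>s\<in>{1/2..1}. f1 (\<i> * of_real s) = 0"
    and f1_smooth: "smooth_on_real {0<..<1} (\<lambda>s. f1 (\<i> * of_real s))"
begin

lemma f1_inv_eq_0: "1 \<le> s \<Longrightarrow> s \<le> 2 \<Longrightarrow> f1 (\<i> / of_real s) = 0"
  using bspec[OF f1_vanishes, of "1 / s"] by (simp add: field_simps)

lemma tf0_imag_eq_0: "\<bar>v\<bar> \<le> 2 \<Longrightarrow> tf0 f1 (of_real v * \<i>) = 0"
  using f1_inv_eq_0[of v] f1_inv_eq_0[of "- v"] by (auto simp: tf0_imag)

lemma ray_weight_eq_0: "\<bar>u\<bar> \<le> 2 \<Longrightarrow> ray_weight f1 x0 T t (of_real u * ray_dir) = 0"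
  by (simp add: ray_weight_def omega_mult_ray_point tf0_imag_eq_0)

lemma norm_F_kernel_weight_le:
  assumes "0 \<le> t" and c: "c \<in> {ray_dir, - ray_dir}" and c': "c' \<in> {ray_dir, - ray_dir}"
    and s: "1 \<le> s" and s': "1 \<le> s'"
  shows "norm (F_kernel (c * of_real s) (c' * of_real s') * ray_weight f1 x0 T t (c' * of_real s'))
    \<le> 3 / (2 * pi) * (decay f1 ((T - t) / 4) s' / s')"
proof -
  obtain u v where uv: "c * of_real s = of_real u * ray_dir" "\<bar>u\<bar> = s"
      "c' * of_real s' = of_real v * ray_dir" "\<bar>v\<bar> = s'"
    using ray_point_real_multiple[OF c] ray_point_real_multiple[OF c'] s s' by fastforce
  show ?thesis
  proof (cases "s' \<le> 2")
    case True
    then show ?thesis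
      using uv by (simp add: ray_weight_eq_0 decay_def)
  next
    case False
    then have "norm (F_kernel (of_real u * ray_dir) (of_real v * ray_dir) * ray_weight f1 x0 T t (of_real v * ray_dir))
        \<le> 3 / \<bar>v\<bar> * (decay f1 ((T - t) / 4) \<bar>v\<bar> / (2 * pi))"
      unfolding norm_mult using assms uv by (intro mult_mono norm_F_kernel_le norm_ray_weight_le) auto
    then show ?thesis
      using uv by (simp add: ac_simps)
  qed
qed

(* The smoothness of f1 is used only here, to make the integrands measurable. *)
lemma continuous_on_f1_inv: "continuous_on {1<..} (\<lambda>s. f1 (\<i> / of_real s))"
proof -
  obtain D where D0: "D 0 = (\<lambda>s. f1 (\<i> * of_real s))"
    and D: "\<And>n s. s \<in> {0<..<1} \<Longrightarrow> (D n has_vector_derivative D (Suc n) s) (at s)"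
    using f1_smooth unfolding smooth_on_real_def by blast
  have cont: "continuous_on {0<..<1} (\<lambda>s. f1 (\<i> * of_real s))"
    unfolding D0[symmetric]
    by (metis D continuous_at_imp_continuous_on has_vector_derivative_continuous)
  have "continuous_on {1<..} ((\<lambda>s. f1 (\<i> * of_real s)) \<circ> (\<lambda>s. 1 / s))"
    by (rule continuous_on_compose[OF _ continuous_on_subset[OF cont]])
       (auto intro!: continuous_intros simp: field_simps)
  then show ?thesis
    by (simp add: comp_def)
qed

lemma f1_inv_measurable [measurable]:
  "(\<lambda>s. indicator {1..} s *\<^sub>R f1 (\<i> / of_real s)) \<in> borel_measurable borel"
proof -
  have "(\<lambda>s. indicator {1<..} s *\<^sub>R f1 (\<i> / of_real s)) \<in> borel_measurable borel"
    by (intro borel_measurable_continuous_on_indicator continuous_on_f1_inv) simp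
  moreover have "(\<lambda>s. indicator {1..} s *\<^sub>R f1 (\<i> / of_real s)) = (\<lambda>s. indicator {1<..} s *\<^sub>R f1 (\<i> / of_real s))"
    using f1_inv_eq_0[of 1] by (intro ext) (auto simp: indicator_def)
  ultimately show ?thesis
    by simp
qed

lemma f1_inv_integrable:
  assumes hint: "(\<integral>\<^sup>+ y\<in>{1..}. ennreal (norm (f1 (\<i> / of_real y)) / y) \<partial>lborel) \<le> ennreal (1 / M)"
    and M: "0 < M"
  shows "integrable lborel (\<lambda>s. indicator {1..} s * (norm (f1 (\<i> / of_real s)) / s))"
    and "(\<integral>s. indicator {1..} s * (norm (f1 (\<i> / of_real s)) / s) \<partial>lborel) \<le> 1 / M"
proof -
  let ?g = "\<lambda>s. indicator {1..} s * (norm (f1 (\<i> / of_real s)) / s)"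
  have "(\<lambda>s. norm (indicator {1..} s *\<^sub>R f1 (\<i> / of_real s)) / s) \<in> borel_measurable borel"
    using f1_inv_measurable by measurable
  then have meas: "?g \<in> borel_measurable borel"
    by simp
  have "(\<integral>\<^sup>+ y\<in>{1..}. ennreal (norm (f1 (\<i> / of_real y)) / y) \<partial>lborel) = (\<integral>\<^sup>+ s. ennreal (?g s) \<partial>lborel)"
    by (intro nn_integral_cong) (simp add: indicator_def)
  with hint have nn: "(\<integral>\<^sup>+ s. ennreal (?g s) \<partial>lborel) \<le> ennreal (1 / M)"
    by simp
  show int: "integrable lborel ?g"
  proof (rule integrableI_bounded)
    have "(\<integral>\<^sup>+ s. ennreal (norm (?g s)) \<partial>lborel) = (\<integral>\<^sup>+ s. ennreal (?g s) \<partial>lborel)"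
      by (intro nn_integral_cong) (simp add: indicator_def)
    then show "(\<integral>\<^sup>+ s. ennreal (norm (?g s)) \<partial>lborel) < \<infinity>"
      using nn by (simp add: order_le_less_trans)
  qed (use meas in simp)
  have "ennreal (\<integral>s. ?g s \<partial>lborel) = (\<integral>\<^sup>+ s. ennreal (?g s) \<partial>lborel)"
    by (rule nn_integral_eq_integral[symmetric]) (use int in \<open>auto simp: indicator_def\<close>)
  with nn have "ennreal (\<integral>s. ?g s \<partial>lborel) \<le> ennreal (1 / M)"
    by simp
  with M show "(\<integral>s. ?g s \<partial>lborel) \<le> 1 / M"
    by simp
qed

lemma ray_weight_measurable:
  assumes "c \<in> {ray_dir, - ray_dir}"
  shows "(\<lambda>s. indicator {1..} s *\<^sub>R ray_weight f1 x0 T t (c * of_real s)) \<in> borel_measurable borel"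
proof -
  define g where "g s = indicator {1..} s *\<^sub>R f1 (\<i> / of_real s)" for s
  have "omega * c = (if c = ray_dir then \<i> else - \<i>)"
    using assms omega_mult_ray_dir by auto
  then have "omega * (c * of_real s) = of_real (if c = ray_dir then s else - s) * \<i>" for s
    by (simp add: mult.assoc[symmetric] mult.commute)
  then have tf0_ray: "indicator {1..} s *\<^sub>R tf0 f1 (omega * (c * of_real s))
      = (if c = ray_dir then r_tilde (of_real s * \<i>) * cnj (g s) else g s)" for s
    using f1_inv_eq_0[of 1] by (auto simp: g_def indicator_def tf0_imag)
  have "indicator {1..} s *\<^sub>R ray_weight f1 x0 T t (c * of_real s)
      = exp (- of_real x0 * (omega * (c * of_real s) / 2)) * exp (of_real ((T - t) / 4) * (omega * (c * of_real s))\<^sup>2)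
        * (if c = ray_dir then r_tilde (of_real s * \<i>) * cnj (g s) else g s)
        * exp (of_real t / (4 * (omega * (c * of_real s))\<^sup>2)) / (2 * pi * \<i>)" for s
    unfolding ray_weight_def tf0_ray[symmetric] by (simp add: indicator_def)
  moreover have "g \<in> borel_measurable borel"
    unfolding g_def by measurable
  ultimately show ?thesis
    unfolding r_tilde_def by simp measurable
qed

lemma F_kernel_weight_measurable:
  assumes "c' \<in> {ray_dir, - ray_dir}"
  shows "(\<lambda>s'. indicator {1..} s' *\<^sub>R (F_kernel k (c' * of_real s') * ray_weight f1 x0 T t (c' * of_real s')))
    \<in> borel_measurable borel"
proof -
  note [measurable] = ray_weight_measurable[OF assms]
  have "(\<lambda>s'. indicator {1..} s' *\<^sub>R (F_kernel k (c' * of_real s') * ray_weight f1 x0 T t (c' * of_real s')))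
      = (\<lambda>s'. F_kernel k (c' * of_real s') * (indicator {1..} s' *\<^sub>R ray_weight f1 x0 T t (c' * of_real s')))"
    by (simp add: fun_eq_iff)
  then show ?thesis
    unfolding F_kernel_def by (simp only:) measurable
qed

lemma FF1_coefficient_measurable:
  assumes "c \<in> {ray_dir, - ray_dir}"
  shows "(\<lambda>s. indicator {1..} s *\<^sub>R ((omega / (c * of_real s)\<^sup>2 - omega\<^sup>2) * ray_weight f1 x0 T t (c * of_real s)))
    \<in> borel_measurable borel"
proof -
  note [measurable] = ray_weight_measurable[OF assms]
  have "(\<lambda>s. indicator {1..} s *\<^sub>R ((omega / (c * of_real s)\<^sup>2 - omega\<^sup>2) * ray_weight f1 x0 T t (c * of_real s)))
      = (\<lambda>s. (omega / (c * of_real s)\<^sup>2 - omega\<^sup>2) * (indicator {1..} s *\<^sub>R ray_weight f1 x0 T t (c * of_real s)))"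
    by (simp add: fun_eq_iff)
  then show ?thesis
    by (simp only:) measurable
qed

lemma GG_measurable:
  assumes "c \<in> {ray_dir, - ray_dir}"
  shows "(\<lambda>s. GG f1 x0 T x t n (c * of_real s)) \<in> borel_measurable borel \<and>
    (\<lambda>s. GG_dx f1 x0 T x t n (c * of_real s)) \<in> borel_measurable borel"
proof (induction n arbitrary: c)
  case 0
  then show ?case
    by simp
next
  case (Suc n)
  define W where "W k = exp (of_real x * x_exponent k) * ray_weight f1 x0 T t k * GG f1 x0 T x t n k" for k
  define W' where "W' k = exp (of_real x * x_exponent k) * ray_weight f1 x0 T t k
    * (x_exponent k * GG f1 x0 T x t n k + GG_dx f1 x0 T x t n k)" for k
  have W_meas: "(\<lambda>s. indicator {1..} s *\<^sub>R W (c' * of_real s)) \<in> borel_measurable borel \<and>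
      (\<lambda>s. indicator {1..} s *\<^sub>R W' (c' * of_real s)) \<in> borel_measurable borel"
    if c': "c' \<in> {ray_dir, - ray_dir}" for c'
  proof -
    note [measurable] = ray_weight_measurable[OF c']
      Suc.IH[of c', THEN conjunct1] Suc.IH[of c', THEN conjunct2]
    have "indicator {1..} s *\<^sub>R (a * ray_weight f1 x0 T t (c' * of_real s) * b)
        = a * (indicator {1..} s *\<^sub>R ray_weight f1 x0 T t (c' * of_real s)) * b" for a b s
      by (simp add: indicator_def)
    then show ?thesis
      unfolding W_def W'_def by (simp only:) (intro conjI; measurable)
  qed
  have GG_eqs: "GG f1 x0 T x t (Suc n) k = tGamma_int (\<lambda>k'. F_kernel k k' * W k')"
    "GG_dx f1 x0 T x t (Suc n) k = tGamma_int (\<lambda>k'. F_kernel k k' * W' k')" for k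
    unfolding GG_Suc_eq GG_dx_Suc_eq W_def W'_def by (simp_all add: ac_simps)
  show ?case
    unfolding GG_eqs tGamma_int_eq_rays
    by (intro conjI borel_measurable_add borel_measurable_ray_int_F_kernel
        W_meas[THEN conjunct1] W_meas[THEN conjunct2]) simp_all
qed

end

section \<open>Estimates for the iterated integrals\<close>

lemma square_mult_exp_neg_square_le:
  fixes c s :: real
  assumes "0 < c"
  shows "s\<^sup>2 * exp (- c * s\<^sup>2) \<le> 1 / c"
proof -
  have "c * s\<^sup>2 \<le> exp (c * s\<^sup>2)"
    using exp_ge_add_one_self[of "c * s\<^sup>2"] by linarith
  then show ?thesis
    using assms by (simp add: exp_minus field_simps)
qed

lemma mult_exp_neg_square_le:
  fixes c s :: real
  assumes "0 < c" and "1 \<le> s"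
  shows "s * exp (- c * s\<^sup>2) \<le> 1 / c"
proof -
  have "s * exp (- c * s\<^sup>2) \<le> s\<^sup>2 * exp (- c * s\<^sup>2)"
    using assms(2) by (intro mult_right_mono) (auto simp: power2_eq_square)
  then show ?thesis
    using square_mult_exp_neg_square_le[OF assms(1)] by (rule order_trans)
qed

lemma integrable_mult_bounded_on_support:
  fixes f w :: "'a \<Rightarrow> real"
  assumes f_int: "integrable M f" and w_meas: "w \<in> borel_measurable M"
    and w_le: "\<And>a. f a \<noteq> 0 \<Longrightarrow> \<bar>w a\<bar> \<le> C"
  shows "integrable M (\<lambda>a. w a * f a)"
proof (rule Bochner_Integration.integrable_bound[OF integrable_mult_right[OF f_int, of C]])
  show "(\<lambda>a. w a * f a) \<in> borel_measurable M"
    using w_meas borel_measurable_integrable[OF f_int] by measurable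
  have "\<bar>w a\<bar> * \<bar>f a\<bar> \<le> \<bar>C\<bar> * \<bar>f a\<bar>" for a
    using w_le[of a] by (cases "f a = 0") (auto intro: mult_right_mono)
  then show "AE a in M. norm (w a * f a) \<le> norm (C * f a)"
    by (simp add: abs_mult)
qed

(* The constants q and A of the proof sketch above. *)
definition kernel_mass :: "(complex \<Rightarrow> complex) \<Rightarrow> real \<Rightarrow> real \<Rightarrow> real" where
  "kernel_mass f1 T t = 3 / pi * (\<integral>s. indicator {1..} s * (decay f1 ((T - t) / 4) s / s) \<partial>lborel)"

definition kernel_moment :: "(complex \<Rightarrow> complex) \<Rightarrow> real \<Rightarrow> real \<Rightarrow> real" where
  "kernel_moment f1 T t = 3 / pi * (\<integral>s. indicator {1..} s * decay f1 ((T - t) / 4) s \<partial>lborel)"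

lemma kernel_mass_nonneg: "0 \<le> kernel_mass f1 T t"
proof -
  have "0 \<le> (\<integral>s. indicator {1..} s * (decay f1 ((T - t) / 4) s / s) \<partial>lborel)"
    by (rule integral_nonneg_AE) (auto simp: decay_def split: split_indicator)
  then show ?thesis
    by (simp add: kernel_mass_def)
qed

context
  fixes f1 :: "complex \<Rightarrow> complex" and x0 T t :: real
  assumes f1_vanishes: "\<forall>s\<in>{1/2..1}. f1 (\<i> * of_real s) = 0"
    and f1_smooth: "smooth_on_real {0<..<1} (\<lambda>s. f1 (\<i> * of_real s))"
    and t_nonneg: "0 \<le> t" and t_less: "t < T"
    and f1_integrable: "integrable lborel (\<lambda>s. indicator {1..} s * (norm (f1 (\<i> / of_real s)) / s))"
begin

abbreviation \<phi> :: "real \<Rightarrow> real" where "\<phi> \<equiv> decay f1 ((T - t) / 4)"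

lemma decay_integrable:
  shows "integrable lborel (\<lambda>s. indicator {1..} s * (\<phi> s / s))"
    and "integrable lborel (\<lambda>s. indicator {1..} s * \<phi> s)"
    and "integrable lborel (\<lambda>s. indicator {1..} s * (s * \<phi> s))"
proof -
  define \<tau> where "\<tau> = (T - t) / 4"
  have \<tau>: "0 < \<tau>"
    using t_less by (simp add: \<tau>_def)
  define g where "g s = indicator {1..} s * (norm (f1 (\<i> / of_real s)) / s)" for s
  have g_support: "1 \<le> s" if "g s \<noteq> 0" for s
    using that by (cases "1 \<le> s") (auto simp: g_def)
  have mult_g_integrable: "integrable lborel (\<lambda>s. w s * g s)"
    if w_meas: "w \<in> borel_measurable borel" and w_le: "\<And>s. 1 \<le> s \<Longrightarrow> \<bar>w s\<bar> \<le> C" for w C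
  proof (rule integrable_mult_bounded_on_support)
    show "integrable lborel g"
      using f1_integrable by (simp add: g_def[abs_def])
    show "w \<in> borel_measurable lborel"
      using w_meas by simp
    show "\<bar>w s\<bar> \<le> C" if "g s \<noteq> 0" for s
      using w_le g_support that by blast
  qed
  have exp_le: "\<bar>exp (- \<tau> * s\<^sup>2)\<bar> \<le> 1" "\<bar>s * exp (- \<tau> * s\<^sup>2)\<bar> \<le> 1 / \<tau>"
    "\<bar>s\<^sup>2 * exp (- \<tau> * s\<^sup>2)\<bar> \<le> 1 / \<tau>" if "1 \<le> s" for s
    using \<tau> that mult_exp_neg_square_le[OF \<tau> that] square_mult_exp_neg_square_le[OF \<tau>, of s] by simp_all
  have "(\<lambda>s. indicator {1..} s * (\<phi> s / s)) = (\<lambda>s. exp (- \<tau> * s\<^sup>2) * g s)"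
    "(\<lambda>s. indicator {1..} s * \<phi> s) = (\<lambda>s. (s * exp (- \<tau> * s\<^sup>2)) * g s)"
    "(\<lambda>s. indicator {1..} s * (s * \<phi> s)) = (\<lambda>s. (s\<^sup>2 * exp (- \<tau> * s\<^sup>2)) * g s)"
    by (auto simp: fun_eq_iff g_def decay_def \<tau>_def indicator_def power2_eq_square)
  moreover have "integrable lborel (\<lambda>s. exp (- \<tau> * s\<^sup>2) * g s)"
    by (rule mult_g_integrable) (measurable, erule exp_le(1))
  moreover have "integrable lborel (\<lambda>s. (s * exp (- \<tau> * s\<^sup>2)) * g s)"
    by (rule mult_g_integrable) (measurable, erule exp_le(2))
  moreover have "integrable lborel (\<lambda>s. (s\<^sup>2 * exp (- \<tau> * s\<^sup>2)) * g s)"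
    by (rule mult_g_integrable) (measurable, erule exp_le(3))
  ultimately show "integrable lborel (\<lambda>s. indicator {1..} s * (\<phi> s / s))"
    "integrable lborel (\<lambda>s. indicator {1..} s * \<phi> s)"
    "integrable lborel (\<lambda>s. indicator {1..} s * (s * \<phi> s))"
    by simp_all
qed

lemma kernel_mass_le_inverse:
  assumes "(\<integral>s. indicator {1..} s * (norm (f1 (\<i> / of_real s)) / s) \<partial>lborel) \<le> 1 / M" and "0 < M"
  shows "kernel_mass f1 T t \<le> 1 / M"
proof -
  have "exp (- ((T - t) / 4) * s\<^sup>2) \<le> 1" for s
    using t_less by simp
  then have "(\<integral>s. indicator {1..} s * (\<phi> s / s) \<partial>lborel)
      \<le> (\<integral>s. indicator {1..} s * (norm (f1 (\<i> / of_real s)) / s) \<partial>lborel)"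
    by (intro integral_mono decay_integrable f1_integrable)
       (auto simp: decay_def indicator_def intro!: divide_right_mono mult_left_le_one_le)
  then have "kernel_mass f1 T t \<le> 3 / pi * (1 / M)"
    unfolding kernel_mass_def using assms(1) by (intro mult_left_mono) auto
  also have "\<dots> \<le> 1 / M"
    using pi_gt3 assms(2) by (simp add: field_simps)
  finally show ?thesis .
qed

lemma F_kernel_bound_integrals:
  shows "integrable lborel (\<lambda>s. indicator {1..} s * (3 / (2 * pi) * (\<phi> s / s)))"
    and "integrable lborel (\<lambda>s. indicator {1..} s * (s * (3 / (2 * pi) * (\<phi> s / s))))"
    and "(\<integral>s. indicator {1..} s * (3 / (2 * pi) * (\<phi> s / s)) \<partial>lborel) = kernel_mass f1 T t / 2"
    and "(\<integral>s. indicator {1..} s * (s * (3 / (2 * pi) * (\<phi> s / s))) \<partial>lborel) = kernel_moment f1 T t / 2"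
proof -
  have eqs: "(\<lambda>s. indicator {1..} s * (3 / (2 * pi) * (\<phi> s / s)))
      = (\<lambda>s. 3 / (2 * pi) * (indicator {1..} s * (\<phi> s / s)))"
    "(\<lambda>s. indicator {1..} s * (s * (3 / (2 * pi) * (\<phi> s / s)))) = (\<lambda>s. 3 / (2 * pi) * (indicator {1..} s * \<phi> s))"
    by (auto simp: fun_eq_iff indicator_def)
  show "integrable lborel (\<lambda>s. indicator {1..} s * (3 / (2 * pi) * (\<phi> s / s)))"
    "integrable lborel (\<lambda>s. indicator {1..} s * (s * (3 / (2 * pi) * (\<phi> s / s))))"
    unfolding eqs by (intro integrable_mult_right decay_integrable)+
  show "(\<integral>s. indicator {1..} s * (3 / (2 * pi) * (\<phi> s / s)) \<partial>lborel) = kernel_mass f1 T t / 2"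
    "(\<integral>s. indicator {1..} s * (s * (3 / (2 * pi) * (\<phi> s / s))) \<partial>lborel) = kernel_moment f1 T t / 2"
    unfolding eqs kernel_mass_def kernel_moment_def by (simp_all only: integral_mult_right_zero) simp_all
qed

lemma FF1_bound_integrals:
  shows "integrable lborel (\<lambda>s. indicator {1..} s * (\<phi> s / pi))"
    and "integrable lborel (\<lambda>s. indicator {1..} s * (s * (\<phi> s / pi)))"
    and "(\<integral>s. indicator {1..} s * (\<phi> s / pi) \<partial>lborel) = (\<integral>s. indicator {1..} s * \<phi> s \<partial>lborel) / pi"
    and "(\<integral>s. indicator {1..} s * (s * (\<phi> s / pi)) \<partial>lborel) = (\<integral>s. indicator {1..} s * (s * \<phi> s) \<partial>lborel) / pi"
proof -
  have eqs: "(\<lambda>s. indicator {1..} s * (\<phi> s / pi)) = (\<lambda>s. 1 / pi * (indicator {1..} s * \<phi> s))"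
    "(\<lambda>s. indicator {1..} s * (s * (\<phi> s / pi))) = (\<lambda>s. 1 / pi * (indicator {1..} s * (s * \<phi> s)))"
    by (simp_all add: fun_eq_iff)
  show "integrable lborel (\<lambda>s. indicator {1..} s * (\<phi> s / pi))"
    "integrable lborel (\<lambda>s. indicator {1..} s * (s * (\<phi> s / pi)))"
    unfolding eqs by (intro integrable_mult_right decay_integrable)+
  show "(\<integral>s. indicator {1..} s * (\<phi> s / pi) \<partial>lborel) = (\<integral>s. indicator {1..} s * \<phi> s \<partial>lborel) / pi"
    "(\<integral>s. indicator {1..} s * (s * (\<phi> s / pi)) \<partial>lborel) = (\<integral>s. indicator {1..} s * (s * \<phi> s) \<partial>lborel) / pi"
    unfolding eqs by simp_all
qed

lemma GG_estimates:
  assumes "c \<in> {ray_dir, - ray_dir}" and "1 \<le> s"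
  shows "((\<lambda>x. GG f1 x0 T x t n (c * of_real s)) has_vector_derivative GG_dx f1 x0 T x t n (c * of_real s)) (at x)
    \<and> norm (GG f1 x0 T x t n (c * of_real s)) \<le> kernel_mass f1 T t ^ n
    \<and> norm (GG_dx f1 x0 T x t n (c * of_real s)) \<le> real n * kernel_moment f1 T t * kernel_mass f1 T t ^ (n - 1)"
  using assms
proof (induction n arbitrary: c s x)
  case 0
  then show ?case
    by simp
next
  case (Suc n)
  define C where "C k' = F_kernel (c * of_real s) k' * ray_weight f1 x0 T t k'" for k'
  have C_le: "norm (C (c' * of_real s')) \<le> 3 / (2 * pi) * (\<phi> s' / s')"
    if "c' \<in> {ray_dir, - ray_dir}" "1 \<le> s'" for c' s'
    unfolding C_def
    by (rule norm_F_kernel_weight_le[OF f1_vanishes f1_smooth t_nonneg Suc.prems(1) that(1) Suc.prems(2) that(2)])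
  have C_meas: "(\<lambda>s'. indicator {1..} s' *\<^sub>R C (c' * of_real s')) \<in> borel_measurable borel"
    if "c' \<in> {ray_dir, - ray_dir}" for c'
    unfolding C_def by (rule F_kernel_weight_measurable[OF f1_vanishes f1_smooth that])
  note GG_eqs = GG_Suc_eq[of f1 x0 T _ t n "c * of_real s", folded C_def]
    GG_dx_Suc_eq[of f1 x0 T _ t n "c * of_real s", folded C_def]
  note step = tGamma_int_step[of C "\<lambda>s'. 3 / (2 * pi) * (\<phi> s' / s')" "\<lambda>x. GG f1 x0 T x t n"
      "\<lambda>x. GG_dx f1 x0 T x t n" "kernel_mass f1 T t ^ n"
      "real n * kernel_moment f1 T t * kernel_mass f1 T t ^ (n - 1)" x,
      unfolded F_kernel_bound_integrals(3,4), folded GG_eqs]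
  note hyps = C_le C_meas F_kernel_bound_integrals(1,2) Suc.IH[THEN conjunct1] Suc.IH[THEN conjunct2, THEN conjunct1]
    Suc.IH[THEN conjunct2, THEN conjunct2] GG_measurable[OF f1_vanishes f1_smooth, THEN conjunct1]
    GG_measurable[OF f1_vanishes f1_smooth, THEN conjunct2]
  have der: "((\<lambda>x. GG f1 x0 T x t (Suc n) (c * of_real s)) has_vector_derivative
      GG_dx f1 x0 T x t (Suc n) (c * of_real s)) (at x)"
    by (rule step(1)) (assumption | rule hyps)+
  have GG_le: "norm (GG f1 x0 T x t (Suc n) (c * of_real s)) \<le> 2 * kernel_mass f1 T t ^ n * (kernel_mass f1 T t / 2)"
    by (rule step(2)) (assumption | rule hyps)+
  have "norm (GG_dx f1 x0 T x t (Suc n) (c * of_real s))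
      \<le> 2 * (kernel_mass f1 T t ^ n * (kernel_moment f1 T t / 2)
        + real n * kernel_moment f1 T t * kernel_mass f1 T t ^ (n - 1) * (kernel_mass f1 T t / 2))"
    by (rule step(3)) (assumption | rule hyps)+
  also have "\<dots> = real (Suc n) * kernel_moment f1 T t * kernel_mass f1 T t ^ (Suc n - 1)"
    by (cases n) (simp_all add: algebra_simps)
  finally show ?case
    using der GG_le by (simp add: mult.commute)
qed

lemma m1_estimate:
  assumes "0 < j"
  shows "(\<lambda>x. m1 f1 x0 T j x t) differentiable (at x)"
    and "norm (vector_derivative (\<lambda>x. m1 f1 x0 T j x t) (at x))
      \<le> 2 / pi * (kernel_mass f1 T t ^ (j - 1) * (\<integral>s. indicator {1..} s * (s * \<phi> s) \<partial>lborel)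
        + real (j - 1) * kernel_moment f1 T t * kernel_mass f1 T t ^ (j - 2) * (\<integral>s. indicator {1..} s * \<phi> s \<partial>lborel))"
    (is "_ \<le> ?bound")
proof -
  define C where "C k = (omega / k\<^sup>2 - omega\<^sup>2) * ray_weight f1 x0 T t k" for k
  have C_le: "norm (C (c * of_real s)) \<le> \<phi> s / pi" if "c \<in> {ray_dir, - ray_dir}" "1 \<le> s" for c s
    unfolding C_def by (rule norm_FF1_coefficient_le[OF t_nonneg that])
  have C_meas: "(\<lambda>s. indicator {1..} s *\<^sub>R C (c * of_real s)) \<in> borel_measurable borel"
    if "c \<in> {ray_dir, - ray_dir}" for c
    unfolding C_def by (rule FF1_coefficient_measurable[OF f1_vanishes f1_smooth that])
  have m1_eq: "m1 f1 x0 T j x t = tGamma_int (\<lambda>k. exp (of_real x * x_exponent k) * C k * GG f1 x0 T x t (j - 1) k)"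
    for x
    by (simp add: m1_def FF1_eq C_def)
  note step = tGamma_int_step[of C "\<lambda>s. \<phi> s / pi" "\<lambda>x. GG f1 x0 T x t (j - 1)" "\<lambda>x. GG_dx f1 x0 T x t (j - 1)"
      "kernel_mass f1 T t ^ (j - 1)" "real (j - 1) * kernel_moment f1 T t * kernel_mass f1 T t ^ (j - 1 - 1)" x,
      unfolded FF1_bound_integrals(3,4), folded m1_eq]
  note hyps = C_le C_meas FF1_bound_integrals(1,2)
    GG_estimates[THEN conjunct1] GG_estimates[THEN conjunct2, THEN conjunct1]
    GG_estimates[THEN conjunct2, THEN conjunct2] GG_measurable[OF f1_vanishes f1_smooth, THEN conjunct1]
    GG_measurable[OF f1_vanishes f1_smooth, THEN conjunct2]
  have der: "((\<lambda>x. m1 f1 x0 T j x t) has_vector_derivative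
      tGamma_int (\<lambda>k. exp (of_real x * x_exponent k) * C k
        * (x_exponent k * GG f1 x0 T x t (j - 1) k + GG_dx f1 x0 T x t (j - 1) k))) (at x)"
    by (rule step(1)) (assumption | rule hyps)+
  then show "(\<lambda>x. m1 f1 x0 T j x t) differentiable (at x)"
    by (rule differentiableI_vector)
  have "norm (vector_derivative (\<lambda>x. m1 f1 x0 T j x t) (at x))
      \<le> 2 * (kernel_mass f1 T t ^ (j - 1) * ((\<integral>s. indicator {1..} s * (s * \<phi> s) \<partial>lborel) / pi)
        + real (j - 1) * kernel_moment f1 T t * kernel_mass f1 T t ^ (j - 1 - 1)
          * ((\<integral>s. indicator {1..} s * \<phi> s \<partial>lborel) / pi))"
    unfolding vector_derivative_at[OF der] by (rule step(3)) (assumption | rule hyps)+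
  also have "\<dots> = ?bound"
    by (simp add: algebra_simps numeral_2_eq_2)
  finally show "norm (vector_derivative (\<lambda>x. m1 f1 x0 T j x t) (at x)) \<le> ?bound" .
qed

end

lemma estimate_by_inverse_powers:
  fixes q M R1 R2 :: real and j :: nat
  assumes q: "0 \<le> q" "q \<le> 1 / M" and M: "2 \<le> M" and R1: "0 \<le> R1" and j: "0 < j"
  shows "2 / pi * (q ^ (j - 1) * R1 + real (j - 1) * (3 / pi * R2) * q ^ (j - 2) * R2)
    \<le> 1 / M ^ (j - 1) * R1 + real (j - 1) / M powr (real j - 2) * R2\<^sup>2"
proof -
  have q_pow: "q ^ n \<le> 1 / M ^ n" for n
    using power_mono[OF q(2,1), of n] by (simp add: power_divide)
  have "2 / pi \<le> 1"
    using pi_gt3 by simp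
  then have "2 / pi * (q ^ (j - 1) * R1) \<le> 1 * (1 / M ^ (j - 1) * R1)"
    using q_pow R1 q(1) by (intro mult_mono mult_right_mono) auto
  moreover have "2 / pi * (real (j - 1) * (3 / pi * R2) * q ^ (j - 2) * R2) \<le> real (j - 1) / M powr (real j - 2) * R2\<^sup>2"
  proof (cases "j = 1")
    case False
    then have "real j - 2 = real (j - 2)"
      using j by (simp add: of_nat_diff)
    then have powr_eq: "M powr (real j - 2) = M ^ (j - 2)"
      using M by (simp only:) (rule powr_realpow, simp)
    have "6 / pi\<^sup>2 \<le> 1"
      using pi_gt3 power_mono[of 3 pi 2] by simp
    then have "6 / pi\<^sup>2 * (real (j - 1) * R2\<^sup>2 * q ^ (j - 2)) \<le> 1 * (real (j - 1) * R2\<^sup>2 * (1 / M ^ (j - 2)))"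
      using q_pow q(1) by (intro mult_mono mult_left_mono) auto
    moreover have "2 / pi * (real (j - 1) * (3 / pi * R2) * q ^ (j - 2) * R2)
        = 6 / pi\<^sup>2 * (real (j - 1) * R2\<^sup>2 * q ^ (j - 2))"
      by (simp add: divide_inverse mult_ac power2_eq_square)
    ultimately show ?thesis
      unfolding powr_eq by simp
  qed simp
  ultimately show ?thesis
    by (simp add: distrib_left)
qed

theorem lemma5p2:
  fixes x0 T M :: real and f1 :: "complex \<Rightarrow> complex"
    and j :: nat and x t :: real
  assumes hT: "T > 0"
    and hM: "M \<ge> 2"
    and hzero: "\<And>s. s \<in> {1/2..1} \<Longrightarrow> f1 (\<i> * of_real s) = 0"
    and hsmooth: "smooth_on_real {0<..<1} (\<lambda>s. f1 (\<i> * of_real s))"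
    and hint: "(\<integral>\<^sup>+ y\<in>{1..}. ennreal (norm (f1 (\<i> / of_real y)) / y) \<partial>lborel) \<le> ennreal (1 / M)"
    and hj: "j > 0"
    and ht: "t \<in> {0..<T}"
  shows "(\<lambda>x'. m1 f1 x0 T j x' t) differentiable (at x) \<and>
    norm (vector_derivative (\<lambda>x'. m1 f1 x0 T j x' t) (at x)) \<le>
      1 / M ^ (j - 1) * (LINT y:{1..}|lborel. exp (- ((T - t) / 4) * y\<^sup>2) * norm (of_real y * f1 (\<i> / of_real y)))
      + real (j - 1) / M powr (real j - 2) *
        (LINT y:{1..}|lborel. exp (- ((T - t) / 4) * y\<^sup>2) * norm (f1 (\<i> / of_real y)))\<^sup>2"
proof -
  (* hT is implied by ht. *)
  have vanish: "\<forall>s\<in>{1/2..1}. f1 (\<i> * of_real s) = 0" and M: "0 < M" and t: "0 \<le> t" "t < T"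
    using hzero hM ht by auto
  note f1_int = f1_inv_integrable[OF vanish hsmooth hint M]
  note estimate = m1_estimate[OF vanish hsmooth t f1_int(1) hj, of x0 x, unfolded kernel_moment_def]
  have mass: "kernel_mass f1 T t \<le> 1 / M"
    by (rule kernel_mass_le_inverse[OF vanish hsmooth t f1_int M])
  have "(LINT y:{1..}|lborel. exp (- ((T - t) / 4) * y\<^sup>2) * norm (of_real y * f1 (\<i> / of_real y)))
      = (\<integral>s. indicator {1..} s * (s * decay f1 ((T - t) / 4) s) \<partial>lborel)"
    "(LINT y:{1..}|lborel. exp (- ((T - t) / 4) * y\<^sup>2) * norm (f1 (\<i> / of_real y)))
      = (\<integral>s. indicator {1..} s * decay f1 ((T - t) / 4) s \<partial>lborel)"
    unfolding set_lebesgue_integral_def decay_def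
    by (auto intro!: Bochner_Integration.integral_cong simp: indicator_def norm_mult)
  moreover have "0 \<le> (\<integral>s. indicator {1..} s * (s * decay f1 ((T - t) / 4) s) \<partial>lborel)"
    by (rule integral_nonneg_AE) (auto simp: decay_def split: split_indicator)
  ultimately show ?thesis
    using estimate(1) order_trans[OF estimate(2) estimate_by_inverse_powers[OF kernel_mass_nonneg mass hM _ hj]]
    by simp
qed

end
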